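(* Let $R$ be a nontrivial tangible supersemifield, let $(q,b)$ be a quadratic pair on an $R$-module $V$, and let $x,y\in V$. (a) If $R$ is dense, then $q$ is quasilinear on $Rx+Ry$ if and only if $b(x,y)^2\le_\nu q(x)q(y)$. If this inequality fails, then $q$ is rigid at $(x,y)$. (b) If $R$ is discrete (with $\pi$ as in the context), then $q$ is quasilinear on $Rx+Ry$ if either $b(x,y)^2<_\nu \pi^{-1}q(x)q(y)$, or both $q(x),q(y)$ lie in $eR$ and $b(x,y)^2\cong_\nu \pi^{-1}q(x)q(y)$. If neither of these two conditions holds, then $q$ is $\nu$-rigid at $(x,y)$. If moreover $b(x,y)^2>_\nu \pi^{-1}q(x)q(y)$, then $q$ is rigid at $(x,y)$.
   Context: All semirings are commutative with $1$. A semiring $R$ is supertropical if $e:=1+1$ satisfies $e+e=e$ and, for all $x,y\in R$: if $ex\neq ey$ then $x+y\in\{x,y\}$, and if $ex=ey$ then $x+y=ey$. The ideal $eR$ is totally ordered by $u\le v\iff u+v=v$. For $x,y\in R$ write $x\le_\nu y$, $x\cong_\nu y$, $x<_\nu y$ for $ex\le ey$, $ex=ey$, $ex<ey$ respectively. Put $\mathcal T=R\setminus eR$ and $\mathcal G=eR\setminus\{0\}$. A tangible supersemifield is a supertropical semiring in which $\mathcal T$ is a group under multiplication, $\mathcal G$ is a group under multiplication (with identity $e$), and $e\mathcal T=\mathcal G$; it is nontrivial if $\mathcal G\neq\{e\}$. It is called discrete if $\mathcal G$ has a smallest element $c_0$ with $c_0>e$; then $\pi\in\mathcal T$ denotes an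 element with $e\pi^{-1}=c_0$. Otherwise it is called dense. A quadratic form on an $R$-module $V$ is a map $q:V\to R$ with $q(ax)=a^2q(x)$ for $a\in R,x\in V$, such that there is a symmetric bilinear form $b:V\times V\to R$ with $q(x+y)=q(x)+q(y)+b(x,y)$ for all $x,y\in V$; every such $b$ is a companion of $q$, and $(q,b)$ is a quadratic pair. $q$ is quasilinear on a submodule $W$ if $q(u+v)=q(u)+q(v)$ for all $u,v\in W$. $q$ is rigid at $(x,y)$ if $b_1(x,y)=b_2(x,y)$ for any two companions $b_1,b_2$ of $q$, and $\nu$-rigid at $(x,y)$ if $eb_1(x,y)=eb_2(x,y)$ for any two companions $b_1,b_2$. *)

theory Defs
  imports Main
begin

definition ee :: "'a::comm_semiring_1" where
  "ee = 1 + 1"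

definition eR :: "'a::comm_semiring_1 set" where
  "eR = range (\<lambda>r. ee * r)"

definition tang :: "'a::comm_semiring_1 set" where
  "tang = UNIV - eR"

definition ghost :: "'a::comm_semiring_1 set" where
  "ghost = eR - {0}"

definition supertropical :: "'a::comm_semiring_1 itself \<Rightarrow> bool" where
  "supertropical (T::'a itself) \<longleftrightarrow>
     (ee + ee = (ee::'a)) \<and>
     (\<forall>x y::'a. (ee * x \<noteq> ee * y \<longrightarrow> x + y \<in> {x, y}) \<and>
                (ee * x = ee * y \<longrightarrow> x + y = ee * y))"

definition ghost_le :: "'a::comm_semiring_1 \<Rightarrow> 'a \<Rightarrow> bool" where
  "ghost_le u v \<longleftrightarrow> u + v = v"

definition nu_le :: "'a::comm_semiring_1 \<Rightarrow> 'a \<Rightarrow> bool" where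
  "nu_le x y \<longleftrightarrow> ghost_le (ee * x) (ee * y)"

definition nu_eq :: "'a::comm_semiring_1 \<Rightarrow> 'a \<Rightarrow> bool" where
  "nu_eq x y \<longleftrightarrow> ee * x = ee * y"

definition nu_lt :: "'a::comm_semiring_1 \<Rightarrow> 'a \<Rightarrow> bool" where
  "nu_lt x y \<longleftrightarrow> ghost_le (ee * x) (ee * y) \<and> ee * x \<noteq> ee * y"

definition tangible_supersemifield :: "'a::comm_semiring_1 itself \<Rightarrow> bool" where
  "tangible_supersemifield (T::'a itself) \<longleftrightarrow>
     supertropical T \<and>
     \<comment> \<open>tangible elements form a multiplicative group (identity 1)\<close>
     (1::'a) \<in> tang \<and>
     (\<forall>s\<in>(tang::'a set). \<forall>t\<in>tang. s * t \<in> tang) \<and>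
     (\<forall>t\<in>(tang::'a set). \<exists>s\<in>tang. s * t = 1) \<and>
     \<comment> \<open>ghost elements form a multiplicative group with identity e\<close>
     (ee::'a) \<in> ghost \<and>
     (\<forall>g\<in>(ghost::'a set). \<forall>h\<in>ghost. g * h \<in> ghost) \<and>
     (\<forall>g\<in>(ghost::'a set). ee * g = g) \<and>
     (\<forall>g\<in>(ghost::'a set). \<exists>h\<in>ghost. g * h = ee) \<and>
     (\<lambda>t. ee * t) ` (tang::'a set) = ghost"

definition nontrivial_ssf :: "'a::comm_semiring_1 itself \<Rightarrow> bool" where
  "nontrivial_ssf (T::'a itself) \<longleftrightarrow> (ghost::'a set) \<noteq> {ee}"

definition least_above_e :: "'a::comm_semiring_1 \<Rightarrow> bool" where
  "least_above_e c0 \<longleftrightarrow> c0 \<in> ghost \<and> ghost_le ee c0 \<and> c0 \<noteq> ee \<and>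
     (\<forall>g\<in>ghost. ghost_le ee g \<and> g \<noteq> ee \<longrightarrow> ghost_le c0 g)"

definition discrete_ssf :: "'a::comm_semiring_1 itself \<Rightarrow> bool" where
  "discrete_ssf (T::'a itself) \<longleftrightarrow> (\<exists>c0::'a. least_above_e c0)"

definition dense_ssf :: "'a::comm_semiring_1 itself \<Rightarrow> bool" where
  "dense_ssf T \<longleftrightarrow> \<not> discrete_ssf T"

definition semimodule :: "('a::comm_semiring_1 \<Rightarrow> 'v::comm_monoid_add \<Rightarrow> 'v) \<Rightarrow> bool" where
  "semimodule smult \<longleftrightarrow>
     (\<forall>a u v. smult a (u + v) = smult a u + smult a v) \<and>
     (\<forall>a c v. smult (a + c) v = smult a v + smult c v) \<and>
     (\<forall>a c v. smult (a * c) v = smult a (smult c v)) \<and>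
     (\<forall>v. smult 1 v = v) \<and>
     (\<forall>v. smult 0 v = 0) \<and>
     (\<forall>a. smult a 0 = 0)"

definition symmetric_bilinear ::
  "('a::comm_semiring_1 \<Rightarrow> 'v::comm_monoid_add \<Rightarrow> 'v) \<Rightarrow> ('v \<Rightarrow> 'v \<Rightarrow> 'a) \<Rightarrow> bool" where
  "symmetric_bilinear smult b \<longleftrightarrow>
     (\<forall>u v. b u v = b v u) \<and>
     (\<forall>u u' v. b (u + u') v = b u v + b u' v) \<and>
     (\<forall>a u v. b (smult a u) v = a * b u v)"

definition companion ::
  "('a::comm_semiring_1 \<Rightarrow> 'v::comm_monoid_add \<Rightarrow> 'v) \<Rightarrow> ('v \<Rightarrow> 'a) \<Rightarrow> ('v \<Rightarrow> 'v \<Rightarrow> 'a) \<Rightarrow> bool" where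
  "companion smult q b \<longleftrightarrow> symmetric_bilinear smult b \<and>
     (\<forall>x y. q (x + y) = q x + q y + b x y)"

definition quadratic_form ::
  "('a::comm_semiring_1 \<Rightarrow> 'v::comm_monoid_add \<Rightarrow> 'v) \<Rightarrow> ('v \<Rightarrow> 'a) \<Rightarrow> bool" where
  "quadratic_form smult q \<longleftrightarrow> (\<forall>a x. q (smult a x) = a ^ 2 * q x) \<and> (\<exists>b. companion smult q b)"

definition quadratic_pair ::
  "('a::comm_semiring_1 \<Rightarrow> 'v::comm_monoid_add \<Rightarrow> 'v) \<Rightarrow> ('v \<Rightarrow> 'a) \<Rightarrow> ('v \<Rightarrow> 'v \<Rightarrow> 'a) \<Rightarrow> bool" where
  "quadratic_pair smult q b \<longleftrightarrow> quadratic_form smult q \<and> companion smult q b"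

definition span2 :: "('a::comm_semiring_1 \<Rightarrow> 'v::comm_monoid_add \<Rightarrow> 'v) \<Rightarrow> 'v \<Rightarrow> 'v \<Rightarrow> 'v set" where
  "span2 smult x y = {smult a x + smult c y | a c. True}"

definition quasilinear_on :: "('v::comm_monoid_add \<Rightarrow> 'a::comm_semiring_1) \<Rightarrow> 'v set \<Rightarrow> bool" where
  "quasilinear_on q W \<longleftrightarrow> (\<forall>u\<in>W. \<forall>v\<in>W. q (u + v) = q u + q v)"

definition rigid_at ::
  "('a::comm_semiring_1 \<Rightarrow> 'v::comm_monoid_add \<Rightarrow> 'v) \<Rightarrow> ('v \<Rightarrow> 'a) \<Rightarrow> 'v \<Rightarrow> 'v \<Rightarrow> bool" where
  "rigid_at smult q x y \<longleftrightarrow>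
     (\<forall>b1 b2. companion smult q b1 \<and> companion smult q b2 \<longrightarrow> b1 x y = b2 x y)"

definition nu_rigid_at ::
  "('a::comm_semiring_1 \<Rightarrow> 'v::comm_monoid_add \<Rightarrow> 'v) \<Rightarrow> ('v \<Rightarrow> 'a) \<Rightarrow> 'v \<Rightarrow> 'v \<Rightarrow> bool" where
  "nu_rigid_at smult q x y \<longleftrightarrow>
     (\<forall>b1 b2. companion smult q b1 \<and> companion smult q b2 \<longrightarrow> ee * b1 x y = ee * b2 x y)"

end

theory Submission
  imports Defs
begin

text \<open>Write \<open>\<alpha> = q x\<close>, \<open>\<beta> = q y\<close>, \<open>\<gamma> = b x y\<close>. On the span,
  \<open>q (a x + c y) = a\<^sup>2 \<alpha> + c\<^sup>2 \<beta> + a c \<gamma>\<close>, and \<open>q (u + v) = q u + q v + b u v\<close> where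
  \<open>b u v\<close> is a sum of four cross terms. The square of each cross term is \<open>\<nu>\<close>-bounded by
  the product of two summands of \<open>q u + q v\<close>, so by a supertropical AM-GM inequality the term
  is either \<open>\<nu>\<close>-smaller than the sum or \<open>\<nu>\<close>-equal to it while the sum is ghost; either way it
  is absorbed. In the discrete case the bound \<open>\<gamma>\<^sup>2 <\<^sub>\<nu> \<pi>\<^sup>-\<^sup>1 \<alpha> \<beta>\<close> already forces
  \<open>\<gamma>\<^sup>2 \<le>\<^sub>\<nu> \<alpha> \<beta>\<close>, and at the boundary only the ghost hypothesis on \<open>\<alpha>, \<beta>\<close> saves the
  equality case.

  Conversely, when \<open>\<gamma>\<^sup>2\<close> is too large, density (respectively the gap between \<open>e\<close> and
  \<open>\<pi>\<^sup>-\<^sup>1\<close>) yields an invertible tangible \<open>c\<close> with \<open>\<alpha>, c\<^sup>2 \<beta> <\<^sub>\<nu> c \<gamma>\<close>. Then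
  \<open>q (x + c y) = c \<gamma>\<close>, which breaks quasilinearity, and since every companion produces the same
  value \<open>q (x + c y)\<close>, it determines \<open>\<gamma>\<close>. At the boundary with \<open>\<alpha>\<close> tangible, choosing
  \<open>c \<gamma> \<cong>\<^sub>\<nu> \<alpha>\<close> makes \<open>q (x + c y)\<close> the ghost \<open>e \<alpha>\<close>, which pins down \<open>\<nu>\<close> of the cross
  coefficient.\<close>

section \<open>The \<open>\<nu>\<close>-order on the ghost ideal\<close>

definition ghost_lt :: "'a::comm_semiring_1 \<Rightarrow> 'a \<Rightarrow> bool" where
  "ghost_lt u v \<longleftrightarrow> ghost_le u v \<and> u \<noteq> v"

lemma nu_lt_iff_ghost_lt: "nu_lt x y \<longleftrightarrow> ghost_lt (ee * x) (ee * y)"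
  by (simp add: nu_lt_def ghost_lt_def)

lemma in_ghost_iff: "g \<in> ghost \<longleftrightarrow> g \<in> eR \<and> g \<noteq> 0"
  by (simp add: ghost_def)

lemma ghost_in_eR: "g \<in> ghost \<Longrightarrow> g \<in> eR"
  by (simp add: in_ghost_iff)

lemma ee_mult_in_eR [simp]: "ee * x \<in> eR"
  by (simp add: eR_def)

lemma ghost_le_antisym: "ghost_le u v \<Longrightarrow> ghost_le v u \<Longrightarrow> u = v"
  unfolding ghost_le_def by (metis add.commute)

lemma ghost_le_trans: "ghost_le u v \<Longrightarrow> ghost_le v w \<Longrightarrow> ghost_le u w"
  unfolding ghost_le_def by (metis add.assoc)

lemma zero_ghost_le [simp]: "ghost_le 0 u"
  by (simp add: ghost_le_def)

lemma ghost_le_zero_iff [simp]: "ghost_le u 0 \<longleftrightarrow> u = 0"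
  by (simp add: ghost_le_def)

lemma ghost_le_mult_right: "ghost_le u v \<Longrightarrow> ghost_le (u * w) (v * w)"
  unfolding ghost_le_def by (metis distrib_right)

lemma ghost_le_mult_left: "ghost_le u v \<Longrightarrow> ghost_le (w * u) (w * v)"
  using ghost_le_mult_right by (metis mult.commute)

lemma ghost_le_mult: "ghost_le u v \<Longrightarrow> ghost_le u' v' \<Longrightarrow> ghost_le (u * u') (v * v')"
  by (meson ghost_le_mult_left ghost_le_mult_right ghost_le_trans)

lemma ghost_lt_irrefl [simp]: "\<not> ghost_lt u u"
  by (simp add: ghost_lt_def)

lemma ghost_lt_imp_le: "ghost_lt u v \<Longrightarrow> ghost_le u v"
  by (simp add: ghost_lt_def)

lemma ghost_lt_le_trans: "ghost_lt u v \<Longrightarrow> ghost_le v w \<Longrightarrow> ghost_lt u w"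
  unfolding ghost_lt_def using ghost_le_trans ghost_le_antisym by metis

lemma ghost_le_lt_trans: "ghost_le u v \<Longrightarrow> ghost_lt v w \<Longrightarrow> ghost_lt u w"
  unfolding ghost_lt_def using ghost_le_trans ghost_le_antisym by metis

lemma zero_ghost_lt: "g \<in> ghost \<Longrightarrow> ghost_lt 0 g"
  by (simp add: ghost_lt_def ghost_def)

lemma ghost_lt_nonzero: "ghost_lt u v \<Longrightarrow> v \<noteq> 0"
  unfolding ghost_lt_def by auto

lemma least_above_e_ghost:
  assumes "least_above_e c0"
  shows "c0 \<in> ghost" and "ghost_lt ee c0"
  using assms unfolding least_above_e_def ghost_lt_def by auto

text \<open>The cross term \<open>B\<close> is swallowed by any sum having \<open>T1\<close> and \<open>T2\<close> among its summands
  (lemma \<open>absorbable_add\<close>); the second disjunct is the boundary case of the discrete theorem.\<close>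
definition absorbable :: "'a::comm_semiring_1 \<Rightarrow> 'a \<Rightarrow> 'a \<Rightarrow> bool" where
  "absorbable B T1 T2 \<longleftrightarrow> nu_le (B * B) (T1 * T2) \<or>
     (\<exists>c0. least_above_e c0 \<and> T1 \<in> eR \<and> T2 \<in> eR \<and> ee * (B * B) = c0 * (ee * (T1 * T2)))"

lemma absorbable_commute: "absorbable B T1 T2 \<longleftrightarrow> absorbable B T2 T1"
  unfolding absorbable_def by (auto simp: mult.commute)

section \<open>Quadratic pairs on the span of two vectors\<close>

lemma quadratic_form_smult:
  "quadratic_form smult q \<Longrightarrow> q (smult a x) = a^2 * q x"
  by (simp add: quadratic_form_def)

lemma symmetric_bilinear_span2:
  assumes "symmetric_bilinear smult b"
  shows "b (smult a x + smult c y) (smult a' x + smult c' y)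
     = a * a' * b x x + a * c' * b x y + c * a' * b x y + c * c' * b y y"
proof -
  have sym: "\<And>u v. b u v = b v u" and add: "\<And>u u' v. b (u + u') v = b u v + b u' v"
    and smult: "\<And>a u v. b (smult a u) v = a * b u v"
    using assms unfolding symmetric_bilinear_def by auto
  have right: "\<And>z. b z (smult a' x + smult c' y) = a' * b x z + c' * b y z"
    using sym add smult by metis
  have "b (smult a x + smult c y) (smult a' x + smult c' y)
      = a * b x (smult a' x + smult c' y) + c * b y (smult a' x + smult c' y)"
    using add smult by simp
  also have "\<dots> = a * (a' * b x x + c' * b y x) + c * (a' * b x y + c' * b y y)"
    using right by simp
  finally show ?thesis
    using sym[of y x] by (simp add: distrib_left ac_simps)
qed

lemma companion_span2:
  assumes "quadratic_form smult q" and "companion smult q b"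
  shows "q (smult a x + smult c y) = a^2 * q x + c^2 * q y + a * c * b x y"
proof -
  have "b (smult a x) (smult c y) = a * c * b x y"
    using assms(2) unfolding companion_def symmetric_bilinear_def by (metis mult.assoc mult.commute)
  then show ?thesis
    using assms quadratic_form_smult unfolding companion_def by metis
qed

lemma companion_line:
  assumes "semimodule smult" "quadratic_form smult q" "companion smult q b"
  shows "q (x + smult c y) = q x + c^2 * q y + c * b x y"
  using companion_span2[OF assms(2,3), of 1 x c y] assms(1) by (simp add: semimodule_def)

lemma rigid_at_imp_nu_rigid_at: "rigid_at smult q x y \<Longrightarrow> nu_rigid_at smult q x y"
  unfolding rigid_at_def nu_rigid_at_def by metis

locale supertropical_semiring =
  fixes T :: "'a::comm_semiring_1 itself"
  assumes supertropical: "supertropical T"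
begin

lemma ee_add_ee: "ee + ee = (ee::'a)"
  and add_cases_nu_neq: "\<And>x y::'a. ee * x \<noteq> ee * y \<Longrightarrow> x + y = x \<or> x + y = y"
  and add_nu_eq: "\<And>x y::'a. ee * x = ee * y \<Longrightarrow> x + y = ee * y"
  using supertropical unfolding supertropical_def by auto

lemma ee_mult_ee: "ee * ee = (ee::'a)"
proof -
  have "ee * ee = ee * (1 + 1::'a)" by (simp add: ee_def)
  also have "\<dots> = ee + ee" by (simp only: distrib_left mult_1_right)
  finally show ?thesis using ee_add_ee by simp
qed

lemma in_eR_iff: "(x::'a) \<in> eR \<longleftrightarrow> ee * x = x"
proof
  assume "x \<in> eR"
  then obtain r where "x = ee * r" by (auto simp: eR_def)
  then show "ee * x = x" by (simp add: mult.assoc[symmetric] ee_mult_ee)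
next
  assume "ee * x = x"
  then show "x \<in> eR" unfolding eR_def by (metis rangeI)
qed

lemma zero_in_eR [simp]: "(0::'a) \<in> eR"
  by (simp add: in_eR_iff)

lemma ee_in_eR [simp]: "(ee::'a) \<in> eR"
  by (simp add: in_eR_iff ee_mult_ee)

lemma eR_mult_right: "(u::'a) \<in> eR \<Longrightarrow> u * w \<in> eR"
  by (simp add: in_eR_iff mult.assoc[symmetric])

lemma eR_mult_left: "(w::'a) \<in> eR \<Longrightarrow> u * w \<in> eR"
  using eR_mult_right[of w u] by (simp add: mult.commute)

lemma eR_mult_ee: "(u::'a) \<in> eR \<Longrightarrow> u * ee = u"
  by (simp add: in_eR_iff mult.commute)

lemma nu_mult: "ee * ((x::'a) * y) = (ee * x) * (ee * y)"
proof -
  have "(ee * x) * (ee * y) = (ee * ee) * (x * y)" by (simp add: ac_simps)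
  then show ?thesis by (simp add: ee_mult_ee)
qed

lemma nu_idem [simp]: "ee * (ee * (x::'a)) = ee * x"
  by (simp add: mult.assoc[symmetric] ee_mult_ee)

lemma ee_mult_ghost: "(g::'a) \<in> ghost \<Longrightarrow> ee * g = g"
  by (simp add: in_ghost_iff in_eR_iff)

lemma ghost_le_refl: "(u::'a) \<in> eR \<Longrightarrow> ghost_le u u"
  unfolding ghost_le_def using add_nu_eq[of u u] by (simp add: in_eR_iff)

lemma ghost_le_total: "(u::'a) \<in> eR \<Longrightarrow> v \<in> eR \<Longrightarrow> ghost_le u v \<or> ghost_le v u"
proof (cases "u = v")
  case False
  assume "u \<in> eR" "v \<in> eR"
  then have "ee * u \<noteq> ee * v" using False by (simp add: in_eR_iff)
  then show ?thesis unfolding ghost_le_def by (metis add_cases_nu_neq add.commute)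
qed (simp add: ghost_le_refl)

lemma not_ghost_le: "(u::'a) \<in> eR \<Longrightarrow> v \<in> eR \<Longrightarrow> \<not> ghost_le u v \<longleftrightarrow> ghost_lt v u"
  unfolding ghost_lt_def using ghost_le_total ghost_le_refl ghost_le_antisym by metis

lemma not_ghost_lt: "(u::'a) \<in> eR \<Longrightarrow> v \<in> eR \<Longrightarrow> \<not> ghost_lt u v \<longleftrightarrow> ghost_le v u"
  using not_ghost_le by blast

lemma nu_le_add: "ghost_le (ee * (t::'a)) (ee * (t + r))"
proof -
  have "ee * t + ee * t = ee * t" using add_nu_eq[of "ee * t" "ee * t"] by simp
  then show ?thesis unfolding ghost_le_def distrib_left by (metis add.assoc)
qed

lemma ghost_lt_add: "(u::'a) \<in> eR \<Longrightarrow> v \<in> eR \<Longrightarrow> ghost_lt u m \<Longrightarrow> ghost_lt v m \<Longrightarrow> ghost_lt (u + v) m"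
  by (metis ghost_le_def ghost_le_total add.commute)

lemma add_absorb:
  assumes "ghost_lt (ee * (B::'a)) (ee * S) \<or> (ghost_le (ee * B) (ee * S) \<and> S \<in> eR)"
  shows "S + B = S"
proof (cases "ee * S = ee * B")
  case True
  then have "S \<in> eR" using assms unfolding ghost_lt_def by auto
  then show ?thesis using add_nu_eq[of S B] True by (metis in_eR_iff)
next
  case False
  then have "S + B = S \<or> S + B = B" using add_cases_nu_neq by blast
  moreover have "S + B = B \<Longrightarrow> ghost_le (ee * S) (ee * B)"
    unfolding ghost_le_def by (metis distrib_left)
  ultimately show ?thesis using assms ghost_le_antisym False unfolding ghost_lt_def by metis
qed

lemma add_in_eR_if_nu_eq:
  assumes t: "(t::'a) \<in> eR" and tr: "ee * t = ee * (t + r)"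
  shows "t + r \<in> eR"
proof -
  have "ghost_le (ee * r) (ee * t)" using nu_le_add[of r t] tr by (simp add: add.commute)
  then show ?thesis using add_absorb[of r t] t by simp
qed

lemma add_in_eR_if_two_nu_eq:
  assumes S: "S = T1 + (T2 + R)" and T1: "ee * (T1::'a) = ee * S" and T2: "ee * T2 = ee * S"
  shows "S \<in> eR"
proof -
  have T12: "T1 + T2 = ee * T2" using add_nu_eq T1 T2 by simp
  have "S = (T1 + T2) + R" using S by (simp add: add.assoc)
  moreover have "ee * (T1 + T2) = ee * S" using T12 T2 by simp
  ultimately show ?thesis using add_in_eR_if_nu_eq[of "T1 + T2" R] T12 by simp
qed

lemma add_dominant:
  assumes "nu_lt (t1::'a) d" "nu_lt t2 d"
  shows "t1 + t2 + d = d" and "nu_lt (t1 + t2) d"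
proof -
  show lt: "nu_lt (t1 + t2) d"
    using ghost_lt_add[of "ee * t1" "ee * t2"] assms by (simp add: nu_lt_iff_ghost_lt distrib_left)
  then have "d + (t1 + t2) = d" using add_absorb by (simp add: nu_lt_iff_ghost_lt)
  then show "t1 + t2 + d = d" by (simp add: add.commute)
qed

lemma add_left_cancel_dominant:
  assumes sd: "nu_lt (s::'a) d" and eq: "s + d' = s + d"
  shows "d' = d"
proof -
  have "s + d = d" using add_absorb[of s d] sd by (simp add: nu_lt_iff_ghost_lt add.commute)
  then have sd': "s + d' = d" using eq by simp
  have "nu_lt s d'"
  proof (rule ccontr)
    assume "\<not> nu_lt s d'"
    then have "ghost_le (ee * d') (ee * s)" using not_ghost_lt by (simp add: nu_lt_iff_ghost_lt)
    then have "ee * (s + d') = ee * s" unfolding ghost_le_def by (simp add: distrib_left add.commute)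
    then show False using sd sd' by (simp add: nu_lt_iff_ghost_lt)
  qed
  then have "s + d' = d'" using add_absorb[of s d'] by (simp add: nu_lt_iff_ghost_lt add.commute)
  then show ?thesis using sd' by simp
qed

lemma nu_eq_if_add_eq_nu:
  assumes \<alpha>: "(\<alpha>::'a) \<notin> eR" and eq: "\<alpha> + t = ee * \<alpha>"
  shows "ee * t = ee * \<alpha>"
proof (rule ccontr)
  assume "ee * t \<noteq> ee * \<alpha>"
  then have "\<alpha> + t = \<alpha> \<or> \<alpha> + t = t" using add_cases_nu_neq by metis
  then show False
  proof
    assume "\<alpha> + t = \<alpha>"
    then show False using \<alpha> eq in_eR_iff by simp
  next
    assume "\<alpha> + t = t"
    then have "t = ee * \<alpha>" using eq by simp
    then show False using \<open>ee * t \<noteq> ee * \<alpha>\<close> by simp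
  qed
qed

lemma companion_diag_nu_le:
  assumes V: "semimodule smult" and Q: "quadratic_form smult q" and C: "companion smult q b"
  shows "nu_le (b x x) (q x :: 'a)"
proof -
  have "smult (1 + 1) x = x + x" using V unfolding semimodule_def by metis
  then have "q (x + x) = ee * q x"
    using quadratic_form_smult[OF Q, of "1 + 1" x] ee_mult_ee by (simp add: ee_def power2_eq_square)
  moreover have "q (x + x) = ee * q x + b x x"
    using C add_nu_eq[of "q x" "q x"] unfolding companion_def by simp
  ultimately have "ee * (ee * q x + b x x) = ee * (ee * q x)" by simp
  then show ?thesis
    unfolding nu_le_def ghost_le_def by (simp add: distrib_left add.commute)
qed

lemma absorbable_diag:
  assumes "nu_le (\<beta>::'a) \<alpha>"
  shows "absorbable \<beta> \<alpha> \<alpha>"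
  using ghost_le_mult[OF assms[unfolded nu_le_def] assms[unfolded nu_le_def]]
  unfolding absorbable_def nu_le_def nu_mult by simp

lemma absorbable_scale:
  assumes "absorbable (\<gamma>::'a) \<alpha> \<beta>"
  shows "absorbable (a * c * \<gamma>) (a^2 * \<alpha>) (c^2 * \<beta>)"
proof -
  have sq: "a * c * \<gamma> * (a * c * \<gamma>) = a^2 * c^2 * (\<gamma> * \<gamma>)"
    and prod: "a^2 * \<alpha> * (c^2 * \<beta>) = a^2 * c^2 * (\<alpha> * \<beta>)"
    by (simp_all add: power2_eq_square ac_simps)
  from assms consider "nu_le (\<gamma> * \<gamma>) (\<alpha> * \<beta>)"
    | c0 where "least_above_e c0" "\<alpha> \<in> eR" "\<beta> \<in> eR" "ee * (\<gamma> * \<gamma>) = c0 * (ee * (\<alpha> * \<beta>))"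
    unfolding absorbable_def by blast
  then show ?thesis
  proof cases
    case 1
    then show ?thesis
      unfolding absorbable_def nu_le_def sq prod nu_mult[of "a^2 * c^2"] by (simp add: ghost_le_mult_left)
  next
    case 2
    then show ?thesis
      unfolding absorbable_def sq prod nu_mult[of "a^2 * c^2"] using eR_mult_left by (metis mult.left_commute)
  qed
qed

lemma not_quasilinear_on_span2_if_dominant:
  assumes V: "semimodule smult" and Q: "quadratic_form smult q" and C: "companion smult q b"
    and x: "nu_lt (q x) (c * b x y :: 'a)" and y: "nu_lt (c^2 * q y) (c * b x y)"
  shows "\<not> quasilinear_on q (span2 smult x y)"
proof
  assume ql: "quasilinear_on q (span2 smult x y)"
  have "x = smult 1 x + smult 0 y" and "smult c y = smult 0 x + smult c y"
    using V by (simp_all add: semimodule_def)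
  then have "x \<in> span2 smult x y" and "smult c y \<in> span2 smult x y"
    unfolding span2_def by blast+
  then have "q (x + smult c y) = q x + c^2 * q y"
    using ql quadratic_form_smult[OF Q] unfolding quasilinear_on_def by metis
  moreover have "q (x + smult c y) = c * b x y"
    using companion_line[OF V Q C] add_dominant(1)[OF x y] by simp
  ultimately show False using add_dominant(2)[OF x y] by (simp add: nu_lt_iff_ghost_lt)
qed

lemma rigid_at_if_dominant:
  assumes V: "semimodule smult" and Q: "quadratic_form smult q" and C: "companion smult q b"
    and c: "s * c = 1" and x: "nu_lt (q x) (c * b x y :: 'a)" and y: "nu_lt (c^2 * q y) (c * b x y)"
  shows "rigid_at smult q x y"
proof -
  have "b' x y = b x y" if C': "companion smult q b'" for b'
  proof -
    have "q x + c^2 * q y + c * b' x y = q x + c^2 * q y + c * b x y"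
      using companion_line[OF V Q C'] companion_line[OF V Q C] by metis
    then have "c * b' x y = c * b x y"
      using add_left_cancel_dominant add_dominant(2)[OF x y] by blast
    then show ?thesis using c by (metis mult.assoc mult_1)
  qed
  then show ?thesis unfolding rigid_at_def by metis
qed

end

locale tangible_ssf = supertropical_semiring T for T :: "'a::comm_semiring_1 itself" +
  assumes tangible_supersemifield: "tangible_supersemifield T"
begin

lemma ee_in_ghost: "(ee::'a) \<in> ghost"
  and ghost_mult_closed: "\<And>g h::'a. g \<in> ghost \<Longrightarrow> h \<in> ghost \<Longrightarrow> g * h \<in> ghost"
  and ghost_inverse: "\<And>g::'a. g \<in> ghost \<Longrightarrow> \<exists>h\<in>ghost. g * h = ee"
  and ee_mult_tang: "(\<lambda>t. ee * t) ` (tang::'a set) = ghost"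
  and tang_inverse: "\<And>t::'a. t \<in> tang \<Longrightarrow> \<exists>s\<in>tang. s * t = 1"
  using tangible_supersemifield unfolding tangible_supersemifield_def by auto

lemma ee_mult_eq_0_iff [simp]: "ee * (x::'a) = 0 \<longleftrightarrow> x = 0"
proof
  assume x: "ee * x = 0"
  show "x = 0"
  proof (cases "x \<in> eR")
    case True
    then show ?thesis using x by (simp add: in_eR_iff)
  next
    case False
    then have "ee * x \<in> ghost" using ee_mult_tang by (auto simp: tang_def)
    then show ?thesis using x by (simp add: ghost_def)
  qed
qed simp

lemma ee_mult_in_ghost: "(x::'a) \<noteq> 0 \<Longrightarrow> ee * x \<in> ghost"
  by (simp add: in_ghost_iff)

lemma ghost_cancel:
  assumes "(u::'a) \<in> eR" "v \<in> eR" "g \<in> ghost" "u * g = v * g"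
  shows "u = v"
proof -
  obtain h where "g * h = ee" using ghost_inverse assms(3) by blast
  then have "u * g * h = u" "v * g * h = v" using assms eR_mult_ee by (metis mult.assoc)+
  then show ?thesis using assms(4) by metis
qed

lemma ghost_eq_nu_of_unit:
  assumes "(g::'a) \<in> ghost"
  obtains c s where "ee * c = g" "s * c = 1"
proof -
  obtain c where c: "c \<in> tang" "ee * c = g" using ee_mult_tang assms by (metis imageE)
  then obtain s where "s * c = 1" using tang_inverse by blast
  then show ?thesis using c that by blast
qed

lemma ghost_lt_mult_right:
  "(u::'a) \<in> eR \<Longrightarrow> v \<in> eR \<Longrightarrow> g \<in> ghost \<Longrightarrow> ghost_lt u v \<Longrightarrow> ghost_lt (u * g) (v * g)"
  unfolding ghost_lt_def using ghost_le_mult_right ghost_cancel by metis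

lemma ghost_lt_mult_left:
  "(u::'a) \<in> eR \<Longrightarrow> v \<in> eR \<Longrightarrow> g \<in> ghost \<Longrightarrow> ghost_lt u v \<Longrightarrow> ghost_lt (g * u) (g * v)"
  using ghost_lt_mult_right by (metis mult.commute)

lemma ghost_lt_mult_cancel:
  "(u::'a) \<in> eR \<Longrightarrow> v \<in> eR \<Longrightarrow> g \<in> ghost \<Longrightarrow> ghost_lt (u * g) (v * g) \<Longrightarrow> ghost_lt u v"
  by (metis ghost_le_mult_right not_ghost_le ghost_lt_def ghost_le_antisym)

lemma ghost_le_mult_cancel:
  "(u::'a) \<in> eR \<Longrightarrow> v \<in> eR \<Longrightarrow> g \<in> ghost \<Longrightarrow> ghost_le (u * g) (v * g) \<Longrightarrow> ghost_le u v"
  by (metis ghost_lt_mult_right not_ghost_le ghost_lt_def ghost_le_antisym)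

lemma least_above_e_step:
  assumes c0: "least_above_e (c0::'a)" and m: "m \<in> ghost" and w: "w \<in> eR" and mw: "ghost_lt m w"
  shows "ghost_le (c0 * m) w"
proof -
  obtain h where h: "h \<in> ghost" "m * h = ee" using ghost_inverse m by blast
  have wh: "w * h \<in> ghost"
    using ghost_mult_closed h(1) ghost_lt_nonzero[OF mw] w by (simp add: in_ghost_iff)
  have "ghost_lt (m * h) (w * h)" using ghost_lt_mult_right[OF ghost_in_eR[OF m] w h(1) mw] .
  then have "ghost_le c0 (w * h)"
    using c0 wh h(2) unfolding least_above_e_def ghost_lt_def by metis
  then have "ghost_le (c0 * m) (w * (m * h))" using ghost_le_mult_right by (metis mult.assoc mult.commute)
  then show ?thesis using h(2) w by (simp add: eR_mult_ee)
qed

lemma ghost_le_if_lt_least_above_e_mult: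
  assumes c0: "least_above_e c0" and m: "(m::'a) \<in> eR" and w: "w \<in> eR" and wm: "ghost_lt w (c0 * m)"
  shows "ghost_le w m"
proof (rule ccontr)
  assume "\<not> ghost_le w m"
  then have mw: "ghost_lt m w" using not_ghost_le[OF w m] by blast
  then have "m \<in> ghost" using m wm by (auto simp: in_ghost_iff ghost_lt_def)
  then have "ghost_le (c0 * m) w" using least_above_e_step[OF c0 _ w mw] by blast
  then show False using wm ghost_le_antisym unfolding ghost_lt_def by blast
qed

lemma geometric_mean_le:
  assumes "(u::'a) \<in> eR" "v \<in> eR" "w \<in> eR" "m \<in> eR"
    and um: "ghost_le u m" and vm: "ghost_le v m" and wuv: "ghost_le (w * w) (u * v)"
  shows "ghost_le w m \<and> (w = m \<longrightarrow> u = m \<and> v = m)"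
proof (cases "m = 0")
  case True
  then have "w * w = 0" using um vm wuv by simp
  then have "w = 0" using assms(3) ghost_mult_closed by (metis in_ghost_iff)
  then show ?thesis using True um vm by simp
next
  case False
  then have mg: "m \<in> ghost" using assms(4) by (simp add: in_ghost_iff)
  have uvmm: "ghost_le (u * v) (m * m)" using ghost_le_mult[OF um vm] .
  have "ghost_le w m"
  proof (rule ccontr)
    assume "\<not> ghost_le w m"
    then have mw: "ghost_lt m w" using not_ghost_le assms by blast
    have "ghost_lt (m * m) (w * m)" using ghost_lt_mult_right[OF assms(4,3) mg mw] .
    moreover have "ghost_le (w * m) (w * w)" using ghost_le_mult_left ghost_lt_imp_le[OF mw] .
    ultimately show False using wuv uvmm ghost_lt_le_trans by (metis ghost_lt_irrefl)
  qed
  moreover have "u = m \<and> v = m" if "w = m"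
  proof (rule ccontr)
    assume "\<not> (u = m \<and> v = m)"
    then have "ghost_lt (u * v) (m * m)"
      using um vm ghost_lt_mult_right[OF assms(1,4) mg] ghost_lt_mult_left[OF assms(2,4) mg]
        ghost_le_mult_left[OF vm, of u] ghost_le_mult_right[OF um, of m]
        ghost_le_lt_trans unfolding ghost_lt_def by metis
    then show False using wuv that ghost_le_lt_trans by fastforce
  qed
  ultimately show ?thesis by blast
qed

lemma geometric_mean_le_discrete:
  assumes c0: "least_above_e (c0::'a)"
    and u: "u \<in> eR" and v: "v \<in> eR" and w: "w \<in> eR" and m: "m \<in> eR"
    and um: "ghost_le u m" and vm: "ghost_le v m" and wuv: "w * w = c0 * (u * v)"
  shows "ghost_le w m \<and> (w = m \<longrightarrow> u = m \<or> v = m)"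
proof (cases "m = 0")
  case True
  then have "w * w = 0" using um vm wuv by simp
  then have "w = 0" using w ghost_mult_closed by (metis in_ghost_iff)
  then show ?thesis using True um by simp
next
  case False
  then have mg: "m \<in> ghost" using m by (simp add: in_ghost_iff)
  have c0g: "c0 \<in> ghost" and ee_c0: "ghost_lt ee c0" using least_above_e_ghost[OF c0] by auto
  have mm: "m * m \<in> ghost" using ghost_mult_closed mg by blast
  have "ghost_le w m"
  proof (rule ccontr)
    assume "\<not> ghost_le w m"
    then have "ghost_le (c0 * m) w" using least_above_e_step[OF c0 mg w] not_ghost_le[OF w m] by blast
    then have "ghost_le (c0 * m * (c0 * m)) (c0 * (m * m))"
      using ghost_le_mult wuv ghost_le_mult_left[OF ghost_le_mult[OF um vm], of c0]
        ghost_le_trans by metis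
    then have "ghost_le (c0 * (m * m) * c0) (ee * (m * m) * c0)"
      using ghost_in_eR[OF mm] by (simp add: ac_simps in_eR_iff)
    then have "ghost_le (c0 * (m * m)) (ee * (m * m))"
      using ghost_le_mult_cancel[OF eR_mult_left[OF ghost_in_eR[OF mm]] ee_mult_in_eR c0g] by blast
    moreover have "ghost_lt (ee * (m * m)) (c0 * (m * m))"
      using ghost_lt_mult_right[OF ee_in_eR ghost_in_eR[OF c0g] mm ee_c0] .
    ultimately show False using ghost_le_lt_trans by fastforce
  qed
  moreover have "u = m \<or> v = m" if "w = m"
  proof (rule ccontr)
    assume "\<not> (u = m \<or> v = m)"
    then have um': "ghost_lt u m" and vm': "ghost_lt v m" using um vm unfolding ghost_lt_def by auto
    have "u \<noteq> 0" using that wuv mm by (auto simp: in_ghost_iff)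
    then have "ghost_le (c0 * u) m" using least_above_e_step[OF c0 _ m um'] u by (simp add: in_ghost_iff)
    then have "ghost_le (m * m) (m * v)" using that wuv ghost_le_mult_right by (metis mult.assoc)
    then show False using ghost_lt_mult_left[OF v m mg vm'] ghost_le_lt_trans by fastforce
  qed
  ultimately show ?thesis by blast
qed

lemma absorbable_add:
  assumes B: "absorbable (B::'a) T1 T2" and S: "S = T1 + (T2 + R)"
  shows "S + B = S"
proof -
  have S': "S = T2 + (T1 + R)" using S by (simp add: ac_simps)
  have T1S: "ghost_le (ee * T1) (ee * S)" using nu_le_add[of T1 "T2 + R"] S by simp
  have T2S: "ghost_le (ee * T2) (ee * S)" using nu_le_add[of T2 "T1 + R"] S' by simp
  from B consider "ghost_le (ee * B * (ee * B)) (ee * T1 * (ee * T2))"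
    | c0 where "least_above_e c0" "T1 \<in> eR" "T2 \<in> eR"
        "ee * B * (ee * B) = c0 * (ee * T1 * (ee * T2))"
    unfolding absorbable_def nu_le_def nu_mult by blast
  then have "ghost_le (ee * B) (ee * S) \<and> (ee * B = ee * S \<longrightarrow> S \<in> eR)"
  proof cases
    case 1
    then show ?thesis
      using geometric_mean_le[OF _ _ _ _ T1S T2S, of "ee * B"] add_in_eR_if_two_nu_eq[OF S] by simp
  next
    case 2
    then have "ghost_le (ee * B) (ee * S) \<and> (ee * B = ee * S \<longrightarrow> ee * T1 = ee * S \<or> ee * T2 = ee * S)"
      using 2 geometric_mean_le_discrete[OF _ _ _ _ _ T1S T2S, of c0 "ee * B"] by simp
    then show ?thesis
      using 2 add_in_eR_if_nu_eq[of T1 "T2 + R"] add_in_eR_if_nu_eq[of T2 "T1 + R"] S S' by metis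
  qed
  then show ?thesis using add_absorb unfolding ghost_lt_def by blast
qed

lemma quasilinear_on_span2I:
  assumes V: "semimodule smult" and qb: "quadratic_pair smult q b"
    and absorb: "absorbable (b x y) (q x) (q y :: 'a)"
  shows "quasilinear_on q (span2 smult x y)"
  unfolding quasilinear_on_def span2_def
proof (intro ballI)
  fix u v assume "u \<in> {smult a x + smult c y |a c. True}" "v \<in> {smult a x + smult c y |a c. True}"
  then obtain a c a' c' where u: "u = smult a x + smult c y" and v: "v = smult a' x + smult c' y"
    by blast
  have Q: "quadratic_form smult q" and C: "companion smult q b"
    using qb unfolding quadratic_pair_def by auto
  define \<alpha> \<beta> \<gamma> where "\<alpha> = q x" and "\<beta> = q y" and "\<gamma> = b x y"
  define S where "S = (a^2 * \<alpha> + c^2 * \<beta> + a * c * \<gamma>) + (a'^2 * \<alpha> + c'^2 * \<beta> + a' * c' * \<gamma>)"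
  have qu: "q u = a^2 * \<alpha> + c^2 * \<beta> + a * c * \<gamma>" and qv: "q v = a'^2 * \<alpha> + c'^2 * \<beta> + a' * c' * \<gamma>"
    unfolding u v \<alpha>_def \<beta>_def \<gamma>_def using companion_span2[OF Q C] by simp_all
  have buv: "b u v = a * a' * b x x + a * c' * \<gamma> + c * a' * \<gamma> + c * c' * b y y"
    unfolding u v \<gamma>_def using symmetric_bilinear_span2 C unfolding companion_def by blast
  have bxx: "absorbable (b x x) \<alpha> \<alpha>" and byy: "absorbable (b y y) \<beta> \<beta>"
    unfolding \<alpha>_def \<beta>_def using absorbable_diag companion_diag_nu_le[OF V Q C] by auto
  have \<gamma>: "absorbable \<gamma> \<alpha> \<beta>" and \<gamma>': "absorbable \<gamma> \<beta> \<alpha>"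
    using absorb absorbable_commute unfolding \<alpha>_def \<beta>_def \<gamma>_def by auto
  have "S + a * a' * b x x = S"
    by (rule absorbable_add[OF absorbable_scale[OF bxx],
          where R = "c^2 * \<beta> + a * c * \<gamma> + c'^2 * \<beta> + a' * c' * \<gamma>"]) (simp add: S_def ac_simps)
  moreover have "S + a * c' * \<gamma> = S"
    by (rule absorbable_add[OF absorbable_scale[OF \<gamma>],
          where R = "c^2 * \<beta> + a * c * \<gamma> + a'^2 * \<alpha> + a' * c' * \<gamma>"]) (simp add: S_def ac_simps)
  moreover have "S + c * a' * \<gamma> = S"
    by (rule absorbable_add[OF absorbable_scale[OF \<gamma>'],
          where R = "a^2 * \<alpha> + a * c * \<gamma> + c'^2 * \<beta> + a' * c' * \<gamma>"]) (simp add: S_def ac_simps)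
  moreover have "S + c * c' * b y y = S"
    by (rule absorbable_add[OF absorbable_scale[OF byy],
          where R = "a^2 * \<alpha> + a * c * \<gamma> + a'^2 * \<alpha> + a' * c' * \<gamma>"]) (simp add: S_def ac_simps)
  ultimately have "S + b u v = S" unfolding buv by (simp add: add.assoc[symmetric])
  then show "q (u + v) = q u + q v"
    using C unfolding companion_def by (simp add: qu qv S_def)
qed

lemma ex_ghost_gt_ee:
  assumes "nontrivial_ssf T"
  shows "\<exists>h\<in>ghost. ghost_lt (ee::'a) h"
proof -
  have "(ghost::'a set) \<noteq> {ee}" using assms unfolding nontrivial_ssf_def .
  then obtain g where g: "(g::'a) \<in> ghost" "g \<noteq> ee" using ee_in_ghost by auto
  show ?thesis
  proof (cases "ghost_le ee g")
    case True
    then have "ghost_lt ee g" using g(2) unfolding ghost_lt_def by simp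
    then show ?thesis using g(1) by blast
  next
    case False
    then have gee: "ghost_lt g ee" using not_ghost_le ghost_in_eR[OF g(1)] by simp
    obtain h where h: "h \<in> ghost" "g * h = ee" using ghost_inverse g(1) by blast
    have "ghost_lt (g * h) (ee * h)" using ghost_lt_mult_right[OF ghost_in_eR[OF g(1)] ee_in_eR h(1) gee] .
    then have "ghost_lt ee h" using h ee_mult_ghost by simp
    then show ?thesis using h(1) by blast
  qed
qed

lemma ex_ghost_gt:
  assumes "nontrivial_ssf T" and u: "(u::'a) \<in> eR"
  shows "\<exists>w\<in>ghost. ghost_lt u w"
proof (cases "u = 0")
  case True
  then show ?thesis using ee_in_ghost zero_ghost_lt by blast
next
  case False
  then have ug: "u \<in> ghost" using u by (simp add: in_ghost_iff)
  obtain h where h: "(h::'a) \<in> ghost" "ghost_lt ee h" using ex_ghost_gt_ee[OF assms(1)] by blast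
  have "ghost_lt (ee * u) (h * u)" using ghost_lt_mult_right[OF ee_in_eR ghost_in_eR[OF h(1)] ug h(2)] .
  then have "ghost_lt u (h * u)" using ee_mult_ghost[OF ug] by simp
  then show ?thesis using ghost_mult_closed[OF h(1) ug] by blast
qed

lemma ex_ghost_lt:
  assumes "nontrivial_ssf T" and v: "(v::'a) \<in> ghost"
  shows "\<exists>w\<in>ghost. ghost_lt w v"
proof -
  obtain h where h: "(h::'a) \<in> ghost" "ghost_lt ee h" using ex_ghost_gt_ee[OF assms(1)] by blast
  obtain k where k: "k \<in> ghost" "h * k = ee" using ghost_inverse h(1) by blast
  have kv: "k * v \<in> ghost" using ghost_mult_closed k(1) v by blast
  have "ghost_lt (ee * (k * v)) (h * (k * v))"
    using ghost_lt_mult_right[OF ee_in_eR ghost_in_eR[OF h(1)] kv h(2)] .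
  moreover have "h * (k * v) = v" using k(2) ee_mult_ghost[OF v] by (simp add: mult.assoc[symmetric])
  ultimately have "ghost_lt (k * v) v" using ee_mult_ghost[OF kv] by simp
  then show ?thesis using kv by blast
qed

lemma dense_ghost_between:
  assumes dense: "dense_ssf T" and u: "(u::'a) \<in> ghost" and v: "v \<in> ghost" and uv: "ghost_lt u v"
  shows "\<exists>w\<in>ghost. ghost_lt u w \<and> ghost_lt w v"
proof -
  obtain k where k: "k \<in> ghost" "u * k = ee" using ghost_inverse u by blast
  have vk: "v * k \<in> ghost" using ghost_mult_closed[OF v k(1)] .
  have "ghost_lt (u * k) (v * k)" using ghost_lt_mult_right[OF ghost_in_eR[OF u] ghost_in_eR[OF v] k(1) uv] .
  then have ee_vk: "ghost_lt ee (v * k)" using k by simp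
  have "\<not> least_above_e (v * k)" using dense unfolding dense_ssf_def discrete_ssf_def by blast
  then obtain g where g: "g \<in> ghost" "ghost_lt ee g" "\<not> ghost_le (v * k) g"
    using vk ee_vk unfolding least_above_e_def ghost_lt_def by metis
  have gvk: "ghost_lt g (v * k)" using not_ghost_le ghost_in_eR[OF vk] ghost_in_eR[OF g(1)] g(3) by blast
  have "ghost_lt (ee * u) (g * u)" using ghost_lt_mult_right[OF ee_in_eR ghost_in_eR[OF g(1)] u g(2)] .
  then have "ghost_lt u (g * u)" using ee_mult_ghost[OF u] by simp
  moreover have "ghost_lt (g * u) (v * k * u)"
    using ghost_lt_mult_right[OF ghost_in_eR[OF g(1)] ghost_in_eR[OF vk] u gvk] .
  moreover have "v * k * u = v * (u * k)" by (simp add: ac_simps)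
  then have "v * k * u = v" using k(2) ghost_in_eR[OF v] eR_mult_ee by simp
  ultimately show ?thesis using ghost_mult_closed[OF g(1) u] by metis
qed

lemma ex_ghost_between:
  assumes nontriv: "nontrivial_ssf T" and u: "(u::'a) \<in> eR" and v: "v \<in> ghost"
    and uv: "(dense_ssf T \<and> ghost_lt u v) \<or> (least_above_e c0 \<and> ghost_lt (c0 * u) v)"
  shows "\<exists>w\<in>ghost. ghost_lt u w \<and> ghost_lt w v"
proof (cases "u = 0")
  case True
  then show ?thesis using ex_ghost_lt[OF nontriv v] zero_ghost_lt by blast
next
  case False
  then have ug: "u \<in> ghost" using u by (simp add: in_ghost_iff)
  from uv show ?thesis
  proof
    assume "dense_ssf T \<and> ghost_lt u v"
    then show ?thesis using dense_ghost_between ug v by blast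
  next
    assume c0: "least_above_e c0 \<and> ghost_lt (c0 * u) v"
    then have c0g: "c0 \<in> ghost" and "ghost_lt ee c0" using least_above_e_ghost by blast+
    then have "ghost_lt (ee * u) (c0 * u)"
      using ghost_lt_mult_right[OF ee_in_eR ghost_in_eR[OF c0g] ug] by blast
    then have "ghost_lt u (c0 * u)" using ee_mult_ghost[OF ug] by simp
    then show ?thesis using c0 ghost_mult_closed[OF c0g ug] by blast
  qed
qed

lemma ex_separating_ghost:
  assumes nontriv: "nontrivial_ssf T" and A: "(A::'a) \<in> eR" and B: "B \<in> eR" and g: "g \<in> ghost"
    and AB: "(dense_ssf T \<and> ghost_lt (A * B) (g * g)) \<or> (least_above_e c0 \<and> ghost_lt (c0 * (A * B)) (g * g))"
  shows "\<exists>w\<in>ghost. ghost_lt A (w * g) \<and> ghost_lt (w * B) g"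
proof -
  \<comment> \<open>\<open>w\<close> has to lie strictly between \<open>A / g\<close> and \<open>g / B\<close>\<close>
  obtain k where k: "k \<in> ghost" "g * k = ee" using ghost_inverse g by blast
  have Akg: "A * k * g = A" using k(2) A eR_mult_ee by (simp add: ac_simps)
  have above: "ghost_lt A (w * g)" if "w \<in> ghost" "ghost_lt (A * k) w" for w
    using ghost_lt_mult_right[OF eR_mult_right[OF A] ghost_in_eR[OF that(1)] g that(2)] Akg by simp
  show ?thesis
  proof (cases "B = 0")
    case True
    obtain w where "w \<in> ghost" "ghost_lt (A * k) w" using ex_ghost_gt[OF nontriv eR_mult_right[OF A]] by blast
    then show ?thesis using above True zero_ghost_lt[OF g] by auto
  next
    case False
    then have Bg: "B \<in> ghost" using B by (simp add: in_ghost_iff)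
    then obtain kb where kb: "kb \<in> ghost" "B * kb = ee" using ghost_inverse by blast
    have gkb: "g * kb \<in> ghost" using ghost_mult_closed[OF g kb(1)] .
    have rescale: "ghost_lt (z * k) (g * kb)" if "z \<in> eR" "ghost_lt (z * B) (g * g)" for z
    proof -
      have "ghost_lt (z * B * (k * kb)) (g * g * (k * kb))"
        using ghost_lt_mult_right[OF eR_mult_right eR_mult_right ghost_mult_closed[OF k(1) kb(1)] that(2)]
          that(1) ghost_in_eR[OF g] by blast
      moreover have "z * B * (k * kb) = z * k * (B * kb)" and "g * g * (k * kb) = g * kb * (g * k)"
        by (simp_all add: ac_simps)
      ultimately show ?thesis
        using k(2) kb(2) eR_mult_ee eR_mult_right[OF that(1)] eR_mult_right[OF ghost_in_eR[OF g]] by metis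
    qed
    have "(dense_ssf T \<and> ghost_lt (A * k) (g * kb)) \<or> (least_above_e c0 \<and> ghost_lt (c0 * (A * k)) (g * kb))"
      using AB rescale[of A] rescale[of "c0 * A"] A eR_mult_left by (metis mult.assoc)
    then obtain w where w: "w \<in> ghost" "ghost_lt (A * k) w" "ghost_lt w (g * kb)"
      using ex_ghost_between[OF nontriv eR_mult_right[OF A] gkb] by blast
    have "ghost_lt (w * B) (g * kb * B)"
      using ghost_lt_mult_right[OF ghost_in_eR[OF w(1)] ghost_in_eR[OF gkb] Bg w(3)] .
    moreover have "g * kb * B = g * (B * kb)" by (simp add: ac_simps)
    then have "g * kb * B = g" using kb(2) ghost_in_eR[OF g] eR_mult_ee by simp
    ultimately show ?thesis using w above by auto
  qed
qed

lemma ex_dominant_scalar: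
  assumes nontriv: "nontrivial_ssf T"
    and H: "(dense_ssf T \<and> nu_lt (\<alpha> * \<beta>) (\<gamma> * \<gamma>)) \<or>
            (least_above_e c0 \<and> ghost_lt (c0 * (ee * (\<alpha> * \<beta>))) (ee * (\<gamma> * (\<gamma>::'a))))"
  obtains c s where "s * c = 1" "nu_lt \<alpha> (c * \<gamma>)" "nu_lt (c^2 * \<beta>) (c * \<gamma>)"
proof -
  from H obtain z where "ghost_lt z (ee * (\<gamma> * \<gamma>))" unfolding nu_lt_iff_ghost_lt by blast
  then have "\<gamma> \<noteq> 0" using ghost_lt_nonzero by fastforce
  then have g: "ee * \<gamma> \<in> ghost" by (rule ee_mult_in_ghost)
  have "(dense_ssf T \<and> ghost_lt (ee * \<alpha> * (ee * \<beta>)) (ee * \<gamma> * (ee * \<gamma>))) \<or>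
        (least_above_e c0 \<and> ghost_lt (c0 * (ee * \<alpha> * (ee * \<beta>))) (ee * \<gamma> * (ee * \<gamma>)))"
    using H by (simp only: nu_lt_iff_ghost_lt nu_mult)
  then have "\<exists>w\<in>ghost. ghost_lt (ee * \<alpha>) (w * (ee * \<gamma>)) \<and> ghost_lt (w * (ee * \<beta>)) (ee * \<gamma>)"
    by (rule ex_separating_ghost[OF nontriv ee_mult_in_eR ee_mult_in_eR g])
  then obtain w where w: "w \<in> ghost" "ghost_lt (ee * \<alpha>) (w * (ee * \<gamma>))" "ghost_lt (w * (ee * \<beta>)) (ee * \<gamma>)"
    by blast
  obtain c s where c: "ee * c = w" "s * c = 1" using ghost_eq_nu_of_unit[OF w(1)] by blast
  have "ee * (c^2 * \<beta>) = ee * c * (ee * c * (ee * \<beta>))"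
    by (metis nu_mult power2_eq_square mult.assoc)
  moreover have "ee * (c * \<gamma>) = ee * c * (ee * \<gamma>)" by (rule nu_mult)
  ultimately have "ee * (c^2 * \<beta>) = w * (w * (ee * \<beta>))" "ee * (c * \<gamma>) = w * (ee * \<gamma>)"
    using c(1) by simp_all
  moreover have "ghost_lt (w * (w * (ee * \<beta>))) (w * (ee * \<gamma>))"
    using ghost_lt_mult_left[OF eR_mult_left[OF ee_mult_in_eR] ee_mult_in_eR w(1) w(3)] .
  ultimately show ?thesis using that[OF c(2)] w(2) unfolding nu_lt_iff_ghost_lt by simp
qed

lemma ex_scalar_nu_ratio:
  assumes g: "(g::'a) \<in> ghost" and h: "h \<in> ghost"
  obtains c where "ee * c * g = h"
proof -
  obtain k where k: "k \<in> ghost" "g * k = ee" using ghost_inverse g by blast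
  obtain c where c: "ee * c = h * k" using ghost_eq_nu_of_unit ghost_mult_closed[OF h k(1)] by metis
  have "ee * c * g = h * (g * k)" using c by (simp add: ac_simps)
  then show ?thesis using that k(2) eR_mult_ee ghost_in_eR[OF h] by simp
qed

lemma nu_lt_at_boundary_scale:
  assumes c0: "least_above_e c0" and \<alpha>: "(\<alpha>::'a) \<noteq> 0" and \<gamma>: "\<gamma> \<noteq> 0"
    and eq: "ee * \<gamma> * (ee * \<gamma>) = c0 * (ee * \<alpha> * (ee * \<beta>))"
    and c: "ee * c * (ee * \<gamma>) = ee * \<alpha>"
  shows "nu_lt (c^2 * \<beta>) \<alpha>"
proof -
  have c0g: "c0 \<in> ghost" and ee_c0: "ghost_lt ee c0" using least_above_e_ghost[OF c0] by auto
  have \<gamma>\<gamma>: "ee * \<gamma> * (ee * \<gamma>) \<in> ghost" using ghost_mult_closed ee_mult_in_ghost[OF \<gamma>] by blast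
  then have "\<beta> \<noteq> 0" using eq by (auto simp: in_ghost_iff)
  define X where "X = ee * \<alpha> * (ee * \<alpha>) * (ee * \<beta>)"
  have X: "X \<in> ghost" unfolding X_def using ghost_mult_closed ee_mult_in_ghost \<alpha> \<open>\<beta> \<noteq> 0\<close> by blast
  have "ghost_lt (ee * X) (c0 * X)" using ghost_lt_mult_right[OF ee_in_eR ghost_in_eR[OF c0g] X ee_c0] .
  moreover have "ee * (c^2 * \<beta>) * (ee * \<gamma> * (ee * \<gamma>)) = ee * X"
  proof -
    have "ee * (c^2 * \<beta>) = ee * c * (ee * c * (ee * \<beta>))"
      by (metis nu_mult power2_eq_square mult.assoc)
    then have "ee * (c^2 * \<beta>) * (ee * \<gamma> * (ee * \<gamma>))
        = ee * c * (ee * \<gamma>) * (ee * c * (ee * \<gamma>)) * (ee * \<beta>)"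
      by (simp add: ac_simps)
    then show ?thesis using c ghost_in_eR[OF X] unfolding X_def by (simp add: in_eR_iff)
  qed
  moreover have "ee * \<alpha> * (ee * \<gamma> * (ee * \<gamma>)) = c0 * X"
    using eq unfolding X_def by (simp add: ac_simps)
  ultimately show ?thesis
    using ghost_lt_mult_cancel[OF ee_mult_in_eR ee_mult_in_eR \<gamma>\<gamma>] unfolding nu_lt_iff_ghost_lt by metis
qed

lemma nu_eq_of_boundary_line_eq:
  assumes c0: "least_above_e c0" and \<alpha>: "(\<alpha>::'a) \<notin> eR"
    and eq: "ee * (\<gamma> * \<gamma>) = c0 * (ee * (\<alpha> * \<beta>))"
    and F: "\<And>c. \<alpha> + c^2 * \<beta> + c * \<gamma> = \<alpha> + c^2 * \<beta> + c * \<gamma>'"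
  shows "ee * \<gamma>' = ee * \<gamma>"
proof -
  have \<alpha>g: "ee * \<alpha> \<in> ghost" using \<alpha> ee_mult_in_ghost by force
  have eq': "ee * \<gamma> * (ee * \<gamma>) = c0 * (ee * \<alpha> * (ee * \<beta>))" using eq by (simp only: nu_mult)
  have nu_\<alpha>: "ee * (c * t) = ee * \<alpha>" if "ee * c * (ee * t) = ee * \<alpha>" for c t
    using that nu_mult by simp
  show ?thesis
  proof (cases "\<gamma> = 0")
    case True
    have "c0 * (ee * \<alpha> * (ee * \<beta>)) = 0" using eq' True by simp
    then have "\<beta> = 0"
      using least_above_e_ghost(1)[OF c0] \<alpha>g ghost_mult_closed ee_mult_in_ghost by (metis in_ghost_iff)
    have "\<gamma>' = 0"
    proof (rule ccontr)
      assume "\<gamma>' \<noteq> 0"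
      then obtain c where "ee * c * (ee * \<gamma>') = ee * \<alpha>"
        using ex_scalar_nu_ratio ee_mult_in_ghost \<alpha>g by blast
      then have "\<alpha> + c * \<gamma>' = ee * \<alpha>" using add_nu_eq nu_\<alpha> by metis
      moreover have "\<alpha> + c * \<gamma>' = \<alpha>" using F[of c] True \<open>\<beta> = 0\<close> by simp
      ultimately show False using \<alpha> in_eR_iff by metis
    qed
    then show ?thesis using True by simp
  next
    case False
    obtain c where c: "ee * c * (ee * \<gamma>) = ee * \<alpha>"
      using ex_scalar_nu_ratio[OF ee_mult_in_ghost[OF False] \<alpha>g] by blast
    have "\<alpha> + c^2 * \<beta> = \<alpha>"
      using add_absorb nu_lt_at_boundary_scale[OF c0 _ False eq' c] \<alpha>
      unfolding nu_lt_iff_ghost_lt by force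
    moreover have "\<alpha> + c * \<gamma> = ee * \<alpha>" using add_nu_eq nu_\<alpha>[OF c] by metis
    ultimately have "\<alpha> + c * \<gamma>' = ee * \<alpha>" using F[of c] by (simp add: add.assoc)
    then have "ee * (c * \<gamma>') = ee * \<alpha>" by (rule nu_eq_if_add_eq_nu[OF \<alpha>])
    then have "ee * c * (ee * \<gamma>') = ee * c * (ee * \<gamma>)" using c by (simp add: nu_mult)
    moreover have "ee * c \<in> ghost" using c \<alpha>g by (auto simp: in_ghost_iff)
    ultimately show ?thesis using ghost_cancel ee_mult_in_eR by (metis mult.commute)
  qed
qed

lemma nu_rigid_at_if_boundary:
  assumes V: "semimodule smult" and Q: "quadratic_form smult q" and C: "companion smult q b"
    and c0: "least_above_e c0" and tangible: "\<not> (q x \<in> eR \<and> q y \<in> eR)"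
    and eq: "ee * (b x y * b x y) = c0 * (ee * (q x * q y :: 'a))"
  shows "nu_rigid_at smult q x y"
proof -
  have byx: "b y x = b x y" and eq': "ee * (b y x * b y x) = c0 * (ee * (q y * q x))"
    using C eq unfolding companion_def symmetric_bilinear_def by (auto simp: mult.commute)
  have "ee * b' x y = ee * b x y" if C': "companion smult q b'" for b'
  proof (cases "q x \<in> eR")
    case False
    then show ?thesis
      using nu_eq_of_boundary_line_eq[OF c0 _ eq] companion_line[OF V Q C] companion_line[OF V Q C']
      by metis
  next
    case True
    then have "q y \<notin> eR" using tangible by blast
    moreover have "b' y x = b' x y" using C' unfolding companion_def symmetric_bilinear_def by blast
    ultimately show ?thesis
      using nu_eq_of_boundary_line_eq[OF c0 _ eq'] companion_line[OF V Q C] companion_line[OF V Q C'] byx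
      by metis
  qed
  then show ?thesis unfolding nu_rigid_at_def by metis
qed

lemma dense_quasilinear_rigid:
  assumes nontriv: "nontrivial_ssf T" and V: "semimodule smult" and qb: "quadratic_pair smult q b"
    and dense: "dense_ssf T"
  shows "(quasilinear_on q (span2 smult x y) \<longleftrightarrow> nu_le ((b x y)^2) (q x * q y :: 'a)) \<and>
    (\<not> nu_le ((b x y)^2) (q x * q y) \<longrightarrow> rigid_at smult q x y)"
proof -
  have Q: "quadratic_form smult q" and C: "companion smult q b"
    using qb unfolding quadratic_pair_def by auto
  have "quasilinear_on q (span2 smult x y)" if "nu_le ((b x y)^2) (q x * q y)"
    using quasilinear_on_span2I[OF V qb] that unfolding absorbable_def power2_eq_square by blast
  moreover have "\<not> quasilinear_on q (span2 smult x y) \<and> rigid_at smult q x y"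
    if "\<not> nu_le ((b x y)^2) (q x * q y)"
  proof -
    have "nu_lt (q x * q y) (b x y * b x y)"
      using that not_ghost_le unfolding nu_le_def nu_lt_iff_ghost_lt power2_eq_square by simp
    then obtain c s where "s * c = 1" "nu_lt (q x) (c * b x y)" "nu_lt (c^2 * q y) (c * b x y)"
      using ex_dominant_scalar[OF nontriv] dense by blast
    then show ?thesis
      using not_quasilinear_on_span2_if_dominant[OF V Q C] rigid_at_if_dominant[OF V Q C] by blast
  qed
  ultimately show ?thesis by blast
qed

lemma discrete_quasilinear_rigid:
  fixes pinv :: 'a and x y :: "'v::comm_monoid_add"
  assumes nontriv: "nontrivial_ssf T" and V: "semimodule smult" and qb: "quadratic_pair smult q b"
    and c0: "least_above_e (ee * pinv)"
  defines "P \<equiv> pinv * q x * q y"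
  shows "(nu_lt ((b x y)^2) P \<or> (q x \<in> eR \<and> q y \<in> eR \<and> nu_eq ((b x y)^2) P)
      \<longrightarrow> quasilinear_on q (span2 smult x y)) \<and>
    (\<not> nu_lt ((b x y)^2) P \<and> \<not> (q x \<in> eR \<and> q y \<in> eR \<and> nu_eq ((b x y)^2) P)
      \<longrightarrow> nu_rigid_at smult q x y) \<and>
    (nu_lt P ((b x y)^2) \<longrightarrow> rigid_at smult q x y)"
proof -
  have Q: "quadratic_form smult q" and C: "companion smult q b"
    using qb unfolding quadratic_pair_def by auto
  have nu_P: "ee * P = ee * pinv * (ee * (q x * q y))"
    unfolding P_def using nu_mult[of pinv "q x * q y"] by (simp add: mult.assoc)
  have nu_b: "ee * (b x y)^2 = ee * (b x y * b x y)" by (simp add: power2_eq_square)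
  have quasilinear: "quasilinear_on q (span2 smult x y)"
    if "nu_lt ((b x y)^2) P \<or> (q x \<in> eR \<and> q y \<in> eR \<and> nu_eq ((b x y)^2) P)"
  proof -
    have "nu_le (b x y * b x y) (q x * q y) \<or>
        (q x \<in> eR \<and> q y \<in> eR \<and> ee * (b x y * b x y) = ee * pinv * (ee * (q x * q y)))"
      using that ghost_le_if_lt_least_above_e_mult[OF c0 ee_mult_in_eR ee_mult_in_eR]
      unfolding nu_le_def nu_lt_iff_ghost_lt nu_eq_def nu_P nu_b by blast
    then show ?thesis using quasilinear_on_span2I[OF V qb] c0 unfolding absorbable_def by blast
  qed
  have rigid: "rigid_at smult q x y" if Pb: "nu_lt P ((b x y)^2)"
  proof -
    obtain c s where "s * c = 1" "nu_lt (q x) (c * b x y)" "nu_lt (c^2 * q y) (c * b x y)"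
      using ex_dominant_scalar[OF nontriv, of "q x" "q y" "b x y" "ee * pinv"] Pb c0
      unfolding nu_lt_iff_ghost_lt nu_P nu_b by blast
    then show ?thesis using rigid_at_if_dominant[OF V Q C] by blast
  qed
  have nu_rigid: "nu_rigid_at smult q x y"
    if "\<not> nu_lt ((b x y)^2) P" and "\<not> (q x \<in> eR \<and> q y \<in> eR \<and> nu_eq ((b x y)^2) P)"
  proof (cases "nu_lt P ((b x y)^2)")
    case True
    then show ?thesis using rigid rigid_at_imp_nu_rigid_at by blast
  next
    case False
    then have eq: "ee * (b x y * b x y) = ee * pinv * (ee * (q x * q y))"
      using that(1) not_ghost_lt[OF ee_mult_in_eR eR_mult_right[OF ee_mult_in_eR]]
        not_ghost_lt[OF eR_mult_right[OF ee_mult_in_eR] ee_mult_in_eR] ghost_le_antisym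
      unfolding nu_lt_iff_ghost_lt nu_P nu_b by metis
    then show ?thesis
      using nu_rigid_at_if_boundary[OF V Q C c0] that(2) unfolding nu_eq_def nu_P nu_b by blast
  qed
  show ?thesis using quasilinear rigid nu_rigid by blast
qed

end

theorem theorem1p5:
  fixes smult :: "'a::comm_semiring_1 \<Rightarrow> 'v::comm_monoid_add \<Rightarrow> 'v"
    and q :: "'v \<Rightarrow> 'a" and b :: "'v \<Rightarrow> 'v \<Rightarrow> 'a" and x y :: 'v
  assumes R: "tangible_supersemifield TYPE('a)"
    and nontriv: "nontrivial_ssf TYPE('a)"
    and V: "semimodule smult"
    and qb: "quadratic_pair smult q b"
  shows
    "(dense_ssf TYPE('a) \<longrightarrow>
        (quasilinear_on q (span2 smult x y) \<longleftrightarrow> nu_le ((b x y)^2) (q x * q y)) \<and>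
        (\<not> nu_le ((b x y)^2) (q x * q y) \<longrightarrow> rigid_at smult q x y)) \<and>
     (\<forall>pi pinv :: 'a. discrete_ssf TYPE('a) \<and> pi \<in> tang \<and> pi * pinv = 1 \<and>
                     least_above_e (ee * pinv) \<longrightarrow>
        ((nu_lt ((b x y)^2) (pinv * q x * q y) \<or>
          (q x \<in> eR \<and> q y \<in> eR \<and> nu_eq ((b x y)^2) (pinv * q x * q y)))
            \<longrightarrow> quasilinear_on q (span2 smult x y)) \<and>
        (\<not> nu_lt ((b x y)^2) (pinv * q x * q y) \<and>
         \<not> (q x \<in> eR \<and> q y \<in> eR \<and> nu_eq ((b x y)^2) (pinv * q x * q y))
            \<longrightarrow> nu_rigid_at smult q x y) \<and>
        (nu_lt (pinv * q x * q y) ((b x y)^2) \<longrightarrow> rigid_at smult q x y))"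
proof -
  interpret tangible_ssf "TYPE('a)"
    using R by unfold_locales (simp_all add: tangible_supersemifield_def)
  show ?thesis
    using dense_quasilinear_rigid[OF nontriv V qb] discrete_quasilinear_rigid[OF nontriv V qb]
    by blast
qed

end
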